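(* Let $(S,E,I,R^{\mathrm T},R^{\mathrm P},D)$ be a solution of the SEIR$^{\mathrm T}$R$^{\mathrm P}$D system with distributed delays described in the context, where $\gamma\ge 0$, $\mu\ge 0$, $p\in[0,1]$ are constants and $\beta(t)\ge 0$ for all $t$. Assume the history data $S(s)=c_S>0$ and $I(s)=c_I>0$ for all $s\le 0$, and the initial data $E(0)=\beta_0 c_I c_S\int_\theta^L \Psi(\tau)\tau\,d\tau$, $R^{\mathrm T}(0)=c_I p\gamma\int_\epsilon^M\Phi(\rho)\rho\,d\rho$, $R^{\mathrm P}(0)=(1-p)\gamma c_I\int_\theta^L\Psi(\tau)\tau\,d\tau$. Then $S(t)$, $E(t)$, $I(t)$, $R^{\mathrm T}(t)$ and $R^{\mathrm P}(t)$ are non-negative for all $t>0$.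
   Context: The system is $S'(t)=-\beta(t)I(t)S(t)+p\gamma\int_{0}^{\infty}I(t-\rho)\Phi(\rho)\,d\rho$, $E'(t)=\beta(t)I(t)S(t)-\int_{0}^{\infty}\beta(t-\tau)I(t-\tau)S(t-\tau)\Psi(\tau)\,d\tau$, $I'(t)=\int_{0}^{\infty}\beta(t-\tau)I(t-\tau)S(t-\tau)\Psi(\tau)\,d\tau-\gamma I(t)-\mu I(t)$, $R^{\mathrm T\prime}(t)=p\gamma I(t)-p\gamma\int_{0}^{\infty}I(t-\rho)\Phi(\rho)\,d\rho$, $R^{\mathrm P\prime}(t)=(1-p)\gamma I(t)$, $D'(t)=\mu I(t)$, for $t>0$. Here $\Psi,\Phi$ are non-negative Lebesgue integrable probability densities on $[0,\infty)$ ($\int\Psi=\int\Phi=1$) with $\operatorname{supp}\Psi\subset[\theta,L]$ for some $0<\theta<L<\infty$ and $\operatorname{supp}\Phi\subset[\epsilon,M]$ for some $0<\epsilon<M<\infty$. The contact rate $\beta$ is a non-negative smooth function on $\mathbb R$, and $\beta_0$ denotes its (constant) value on the history interval, i.e. $\beta(s)=\beta_0$ for $s\le 0$. $S$ and $I$ are continuous on $\mathbb R$ (given by the history data for $s\le 0$). *)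

theory Defs
  imports "HOL-Analysis.Analysis"
begin

definition smooth_real :: "(real \<Rightarrow> real) \<Rightarrow> bool" where
  "smooth_real f \<longleftrightarrow> (\<forall>n. \<forall>x. ((deriv ^^ n) f) differentiable (at x))"

definition delay_density :: "(real \<Rightarrow> real) \<Rightarrow> real \<Rightarrow> real \<Rightarrow> bool" where
  "delay_density f a b \<longleftrightarrow>
     (\<forall>x\<ge>0. f x \<ge> 0) \<and> set_integrable lborel {0..} f \<and>
     (LINT x:{0..}|lborel. f x) = 1 \<and>
     (\<forall>x\<ge>0. x \<notin> {a..b} \<longrightarrow> f x = 0)"

end

theory Submission
  imports Defs
begin

(* S and I stay positive: at the first time one of them would vanish, both were positive on
   the whole past, so the delayed gain terms are non-negative and S' >= -beta I S,
   I' >= -(gamma+mu) I there, which a Gronwall argument rules out. E and R^T both solve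
   X' = g - Psi * g with g >= 0 constant on the history. For an antiderivative H of g the
   initial data give X t = int Psi(tau) (H t - H (t - tau)) dtau, the mass that entered during
   the last tau time units, which is non-negative. Finally R^P is nondecreasing. *)

lemma continuous_on_UNIV_has_antiderivative:
  fixes g :: "real \<Rightarrow> real"
  assumes "continuous_on UNIV g"
  obtains H where "\<And>x. (H has_real_derivative g x) (at x)"
proof -
  have "\<exists>H. \<forall>x::real. -\<infinity> < ereal x \<longrightarrow> ereal x < \<infinity> \<longrightarrow> (H has_vector_derivative g x) (at x)"
    by (rule einterval_antiderivative) (use assms in \<open>auto simp: continuous_on_eq_continuous_at\<close>)
  then show ?thesis
    using that by (auto simp: has_real_derivative_iff_has_vector_derivative)
qed

lemma set_integral_nonneg:
  fixes f :: "'a \<Rightarrow> real"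
  assumes "\<And>x. x \<in> A \<Longrightarrow> 0 \<le> f x"
  shows "0 \<le> (LINT x:A|M. f x)"
  unfolding set_lebesgue_integral_def using assms
  by (intro Bochner_Integration.integral_nonneg) (auto simp: indicator_def)

lemma set_integrable_mult_continuous:
  fixes w f :: "real \<Rightarrow> real"
  assumes w: "set_integrable lborel {a..b} w" and f: "continuous_on {a..b} f"
  shows "set_integrable lborel {a..b} (\<lambda>x. w x * f x)"
proof -
  obtain B where B: "\<And>x. x \<in> {a..b} \<Longrightarrow> \<bar>f x\<bar> \<le> B"
    using compact_imp_bounded[OF compact_continuous_image[OF f compact_Icc]]
    unfolding bounded_real by blast
  show ?thesis
  proof (rule set_integrable_bound[where f = "\<lambda>x. B * w x"])
    show "set_integrable lborel {a..b} (\<lambda>x. B * w x)"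
      using w by simp
    have "set_borel_measurable lborel {a..b} w"
      using w by (simp add: set_borel_measurable_def set_integrable_def borel_measurable_integrable)
    moreover have "set_borel_measurable lborel {a..b} f"
      using borel_measurable_continuous_on_indicator[OF _ f] by (simp add: set_borel_measurable_def)
    ultimately have "(\<lambda>x. (indicator {a..b} x *\<^sub>R w x) * (indicator {a..b} x *\<^sub>R f x)) \<in> borel_measurable lborel"
      unfolding set_borel_measurable_def by (rule borel_measurable_times)
    moreover have "(\<lambda>x. (indicator {a..b} x *\<^sub>R w x) * (indicator {a..b} x *\<^sub>R f x))
        = (\<lambda>x. indicator {a..b} x *\<^sub>R (w x * f x))"
      by (auto simp: fun_eq_iff indicator_def)
    ultimately show "set_borel_measurable lborel {a..b} (\<lambda>x. w x * f x)"
      unfolding set_borel_measurable_def by simp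
    show "AE x in lborel. x \<in> {a..b} \<longrightarrow> norm (w x * f x) \<le> norm (B * w x)"
    proof (rule AE_I2, intro impI)
      fix x assume "x \<in> {a..b}"
      then have "\<bar>f x\<bar> \<le> \<bar>B\<bar>"
        using B abs_ge_self order_trans by blast
      then show "norm (w x * f x) \<le> norm (B * w x)"
        by (simp add: abs_mult mult.commute mult_right_mono)
    qed
  qed
qed

lemma tendsto_set_integral_weighted_bounded:
  fixes w v :: "real \<Rightarrow> real" and u :: "nat \<Rightarrow> real \<Rightarrow> real"
  assumes w: "set_integrable lborel {a..b} w"
    and u: "\<And>i. continuous_on {a..b} (u i)" and v: "continuous_on {a..b} v"
    and lim: "\<And>\<tau>. \<tau> \<in> {a..b} \<Longrightarrow> (\<lambda>i. u i \<tau>) \<longlonglongrightarrow> v \<tau>"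
    and bound: "\<And>i \<tau>. \<tau> \<in> {a..b} \<Longrightarrow> \<bar>u i \<tau>\<bar> \<le> B"
  shows "(\<lambda>i. LINT \<tau>:{a..b}|lborel. w \<tau> * u i \<tau>) \<longlonglongrightarrow> (LINT \<tau>:{a..b}|lborel. w \<tau> * v \<tau>)"
  unfolding set_lebesgue_integral_def
proof (rule integral_dominated_convergence[where w = "\<lambda>\<tau>. indicator {a..b} \<tau> * (B * \<bar>w \<tau>\<bar>)"])
  show "(\<lambda>\<tau>. indicator {a..b} \<tau> *\<^sub>R (w \<tau> * v \<tau>)) \<in> borel_measurable lborel"
    using set_integrable_mult_continuous[OF w v]
    by (simp add: set_integrable_def borel_measurable_integrable)
  show "(\<lambda>\<tau>. indicator {a..b} \<tau> *\<^sub>R (w \<tau> * u i \<tau>)) \<in> borel_measurable lborel" for i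
    using set_integrable_mult_continuous[OF w u]
    by (simp add: set_integrable_def borel_measurable_integrable)
  show "integrable lborel (\<lambda>\<tau>. indicator {a..b} \<tau> * (B * \<bar>w \<tau>\<bar>))"
    using set_integrable_abs[OF w] by (simp add: set_integrable_def mult.left_commute)
  show "AE \<tau> in lborel. (\<lambda>i. indicator {a..b} \<tau> *\<^sub>R (w \<tau> * u i \<tau>))
      \<longlonglongrightarrow> indicator {a..b} \<tau> *\<^sub>R (w \<tau> * v \<tau>)"
    using lim by (intro AE_I2) (auto simp: indicator_def intro!: tendsto_intros)
  show "AE \<tau> in lborel. norm (indicator {a..b} \<tau> *\<^sub>R (w \<tau> * u i \<tau>))
      \<le> indicator {a..b} \<tau> * (B * \<bar>w \<tau>\<bar>)" for i
    using bound by (intro AE_I2) (auto simp: indicator_def abs_mult mult.commute[of B] intro: mult_left_mono)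
qed

lemma convolution_has_real_derivative:
  fixes w H h :: "real \<Rightarrow> real"
  assumes w: "set_integrable lborel {a..b} w"
    and H: "\<And>x. (H has_real_derivative h x) (at x)" and h: "continuous_on UNIV h"
  shows "((\<lambda>s. LINT \<tau>:{a..b}|lborel. w \<tau> * H (s - \<tau>)) has_real_derivative
           (LINT \<tau>:{a..b}|lborel. w \<tau> * h (t - \<tau>))) (at t)"
proof -
  define q where "q y \<tau> = (H (y - \<tau>) - H (t - \<tau>)) / (y - t)" for y \<tau>
  have Hc: "continuous_on UNIV H"
    using H by (meson DERIV_isCont continuous_at_imp_continuous_on)
  have int_shift: "set_integrable lborel {a..b} (\<lambda>\<tau>. w \<tau> * H (s - \<tau>))" for s
    by (rule set_integrable_mult_continuous[OF w])
      (intro continuous_on_compose2[OF Hc] continuous_intros, auto)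
  have quotient: "((LINT \<tau>:{a..b}|lborel. w \<tau> * H (y - \<tau>)) - (LINT \<tau>:{a..b}|lborel. w \<tau> * H (t - \<tau>))) / (y - t)
      = (LINT \<tau>:{a..b}|lborel. w \<tau> * q y \<tau>)" for y
  proof -
    have "(LINT \<tau>:{a..b}|lborel. w \<tau> * q y \<tau>)
        = (LINT \<tau>:{a..b}|lborel. w \<tau> * H (y - \<tau>) - w \<tau> * H (t - \<tau>)) / (y - t)"
      by (simp add: q_def right_diff_distrib flip: set_integral_divide_zero)
    then show ?thesis
      using int_shift[of y] int_shift[of t] by simp
  qed
  show ?thesis
    unfolding has_field_derivative_iff tendsto_at_iff_sequentially comp_def quotient
  proof (intro allI impI)
    fix X assume X: "\<forall>i. X i \<in> UNIV - {t}" "X \<longlonglongrightarrow> t"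
    obtain K where K: "\<And>i. \<bar>X i\<bar> \<le> K"
      using convergent_imp_Bseq[OF convergentI[OF X(2)]] by (auto simp: Bseq_def)
    define C where "C = {t - b - (K + \<bar>t\<bar>)..t - a + (K + \<bar>t\<bar>)}"
    obtain B where B: "\<And>x. x \<in> C \<Longrightarrow> norm (h x) \<le> B"
      using compact_imp_bounded[OF compact_continuous_image[OF continuous_on_subset[OF h] compact_Icc]]
      unfolding C_def bounded_iff by blast
    show "(\<lambda>i. LINT \<tau>:{a..b}|lborel. w \<tau> * q (X i) \<tau>) \<longlonglongrightarrow> (LINT \<tau>:{a..b}|lborel. w \<tau> * h (t - \<tau>))"
    proof (rule tendsto_set_integral_weighted_bounded[OF w])
      show "continuous_on {a..b} (q (X i))" for i
        unfolding q_def using X(1)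
        by (intro continuous_on_compose2[OF Hc] continuous_intros) auto
      show "continuous_on {a..b} (\<lambda>\<tau>. h (t - \<tau>))"
        by (intro continuous_on_compose2[OF h] continuous_intros) auto
      show "(\<lambda>i. q (X i) \<tau>) \<longlonglongrightarrow> h (t - \<tau>)" for \<tau>
      proof -
        have "((\<lambda>y. (H y - H (t - \<tau>)) / (y - (t - \<tau>))) \<longlongrightarrow> h (t - \<tau>)) (at (t - \<tau>))"
          using H by (simp add: has_field_derivative_iff)
        from this[unfolded tendsto_at_iff_sequentially, rule_format, of "\<lambda>i. X i - \<tau>"]
        show ?thesis
          using X tendsto_diff[OF X(2) tendsto_const[of \<tau>]] by (simp add: q_def comp_def)
      qed
      txt \<open>Mean value inequality on the window C, which contains all the shifted arguments.\<close>
      show "\<bar>q (X i) \<tau>\<bar> \<le> B" if "\<tau> \<in> {a..b}" for i \<tau>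
      proof -
        have "norm (H (X i - \<tau>) - H (t - \<tau>)) \<le> B * norm ((X i - \<tau>) - (t - \<tau>))"
          by (rule field_differentiable_bound[where S = C, OF _ has_field_derivative_at_within[OF H] B])
            (use K[of i] that in \<open>auto simp: C_def abs_le_iff\<close>)
        then show ?thesis
          using X(1) by (simp add: q_def abs_divide divide_le_eq)
      qed
    qed
  qed
qed

lemma delay_density_restrict:
  assumes \<Psi>: "delay_density \<Psi> \<theta> L" and \<theta>: "0 \<le> \<theta>"
  shows "(LINT \<tau>:{0..}|lborel. f \<tau> * \<Psi> \<tau>) = (LINT \<tau>:{\<theta>..L}|lborel. \<Psi> \<tau> * f \<tau>)"
  unfolding set_lebesgue_integral_def
proof (intro Bochner_Integration.integral_cong refl)
  fix x
  show "indicat_real {0..} x *\<^sub>R (f x * \<Psi> x) = indicat_real {\<theta>..L} x *\<^sub>R (\<Psi> x * f x)"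
    using assms unfolding delay_density_def by (cases "0 \<le> x") (auto simp: indicator_def)
qed

lemma delay_density_on_support:
  assumes \<Psi>: "delay_density \<Psi> \<theta> L" and \<theta>: "0 \<le> \<theta>"
  shows "set_integrable lborel {\<theta>..L} \<Psi>" and "(LINT \<tau>:{\<theta>..L}|lborel. \<Psi> \<tau>) = 1"
proof -
  show "set_integrable lborel {\<theta>..L} \<Psi>"
    by (rule set_integrable_subset[of _ "{0..}"]) (use \<Psi> \<theta> in \<open>auto simp: delay_density_def\<close>)
  show "(LINT \<tau>:{\<theta>..L}|lborel. \<Psi> \<tau>) = 1"
    using delay_density_restrict[OF assms, of "\<lambda>_. 1"] \<Psi> unfolding delay_density_def by simp
qed

lemma antiderivative_affine_on_nonpos:
  fixes H g :: "real \<Rightarrow> real"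
  assumes H: "\<And>x. (H has_real_derivative g x) (at x)" and g: "\<And>x. x \<le> 0 \<Longrightarrow> g x = c"
    and s: "s \<le> 0"
  shows "H s = H 0 + c * s"
proof (cases "s = 0")
  case False
  have "(\<lambda>x. H x - c * x) 0 = (\<lambda>x. H x - c * x) s"
  proof (rule DERIV_isconst_end[where f = "\<lambda>x. H x - c * x"])
    show "s < 0"
      using s False by simp
    have "continuous_on UNIV H"
      using H by (meson DERIV_isCont continuous_at_imp_continuous_on)
    then show "continuous_on {s..0} (\<lambda>x. H x - c * x)"
      by (intro continuous_intros) (rule continuous_on_subset, auto)
    show "((\<lambda>x. H x - c * x) has_real_derivative 0) (at x)" if "s < x" "x < 0" for x
      using that g[of x] by (auto intro!: derivative_eq_intros H)
  qed
  then show ?thesis by simp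
qed simp

lemma transit_mass_has_real_derivative:
  fixes g H \<Psi> :: "real \<Rightarrow> real"
  assumes \<theta>: "0 \<le> \<theta>" and \<Psi>: "delay_density \<Psi> \<theta> L"
    and H: "\<And>x. (H has_real_derivative g x) (at x)" and g: "continuous_on UNIV g"
  shows "((\<lambda>s. LINT \<tau>:{\<theta>..L}|lborel. \<Psi> \<tau> * (H s - H (s - \<tau>))) has_real_derivative
           g s - (LINT \<tau>:{0..}|lborel. g (s - \<tau>) * \<Psi> \<tau>)) (at s)"
proof -
  note \<Psi>_support = delay_density_on_support[OF \<Psi> \<theta>]
  have H_cont: "continuous_on UNIV H"
    using H by (meson DERIV_isCont continuous_at_imp_continuous_on)
  have "set_integrable lborel {\<theta>..L} (\<lambda>\<tau>. \<Psi> \<tau> * H (s - \<tau>))" for s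
    by (rule set_integrable_mult_continuous[OF \<Psi>_support(1)])
      (intro continuous_on_compose2[OF H_cont] continuous_intros, auto)
  then have "(LINT \<tau>:{\<theta>..L}|lborel. \<Psi> \<tau> * (H s - H (s - \<tau>)))
      = H s - (LINT \<tau>:{\<theta>..L}|lborel. \<Psi> \<tau> * H (s - \<tau>))" for s
    using \<Psi>_support by (simp add: right_diff_distrib)
  then show ?thesis
    unfolding delay_density_restrict[OF \<Psi> \<theta>]
    by (simp only:) (intro DERIV_diff H convolution_has_real_derivative[OF \<Psi>_support(1) H g])
qed

lemma delay_compartment_eq_mass_in_transit:
  fixes X g H \<Psi> :: "real \<Rightarrow> real"
  assumes \<theta>: "0 \<le> \<theta>" and \<Psi>: "delay_density \<Psi> \<theta> L"
    and H: "\<And>s. (H has_real_derivative g s) (at s)" and g: "continuous_on UNIV g"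
    and g_past: "\<And>s. s \<le> 0 \<Longrightarrow> g s = g\<^sub>0"
    and X: "continuous_on {0..} X"
    and dX: "\<And>s. 0 < s \<Longrightarrow>
      (X has_real_derivative g s - (LINT \<tau>:{0..}|lborel. g (s - \<tau>) * \<Psi> \<tau>)) (at s)"
    and X0: "X 0 = g\<^sub>0 * (LINT \<tau>:{\<theta>..L}|lborel. \<Psi> \<tau> * \<tau>)"
    and t: "0 \<le> t"
  shows "X t = (LINT \<tau>:{\<theta>..L}|lborel. \<Psi> \<tau> * (H t - H (t - \<tau>)))"
proof -
  define F where "F s = (LINT \<tau>:{\<theta>..L}|lborel. \<Psi> \<tau> * (H s - H (s - \<tau>)))" for s
  have dF: "(F has_real_derivative g s - (LINT \<tau>:{0..}|lborel. g (s - \<tau>) * \<Psi> \<tau>)) (at s)" for s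
    unfolding F_def[abs_def] by (rule transit_mass_has_real_derivative[OF \<theta> \<Psi> H g])
  have F0: "F 0 = X 0"
  proof -
    have "\<Psi> \<tau> * (H 0 - H (0 - \<tau>)) = g\<^sub>0 * (\<Psi> \<tau> * \<tau>)" if "\<tau> \<in> {\<theta>..L}" for \<tau>
      using antiderivative_affine_on_nonpos[OF H g_past, of "- \<tau>"] that \<theta> by simp
    then have "F 0 = (LINT \<tau>:{\<theta>..L}|lborel. g\<^sub>0 * (\<Psi> \<tau> * \<tau>))"
      unfolding F_def by (intro set_lebesgue_integral_cong) auto
    then show ?thesis
      using X0 by simp
  qed
  have "X t - F t = X 0 - F 0"
  proof (cases "t = 0")
    case False
    show ?thesis
    proof (rule DERIV_isconst_end[where f = "\<lambda>s. X s - F s"])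
      show "0 < t"
        using t False by simp
      have "continuous_on UNIV F"
        using dF by (meson DERIV_isCont continuous_at_imp_continuous_on)
      then show "continuous_on {0..t} (\<lambda>s. X s - F s)"
        using X by (intro continuous_intros) (rule continuous_on_subset, auto)+
      show "((\<lambda>s. X s - F s) has_real_derivative 0) (at s)" if "0 < s" "s < t" for s
        using DERIV_diff[OF dX dF] that by simp
    qed
  qed simp
  with F0 have "X t = F t"
    by simp
  then show ?thesis
    by (simp add: F_def)
qed

lemma delay_compartment_nonneg:
  fixes X g \<Psi> :: "real \<Rightarrow> real"
  assumes \<theta>: "0 \<le> \<theta>" and \<Psi>: "delay_density \<Psi> \<theta> L"
    and g: "continuous_on UNIV g" and g_nonneg: "\<And>s. 0 \<le> g s"
    and g_past: "\<And>s. s \<le> 0 \<Longrightarrow> g s = g\<^sub>0"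
    and X: "continuous_on {0..} X"
    and dX: "\<And>s. 0 < s \<Longrightarrow>
      (X has_real_derivative g s - (LINT \<tau>:{0..}|lborel. g (s - \<tau>) * \<Psi> \<tau>)) (at s)"
    and X0: "X 0 = g\<^sub>0 * (LINT \<tau>:{\<theta>..L}|lborel. \<Psi> \<tau> * \<tau>)"
    and t: "0 \<le> t"
  shows "0 \<le> X t"
proof -
  obtain H where H: "\<And>s. (H has_real_derivative g s) (at s)"
    using continuous_on_UNIV_has_antiderivative[OF g] by blast
  have "0 \<le> \<Psi> \<tau> * (H t - H (t - \<tau>))" if "\<tau> \<in> {\<theta>..L}" for \<tau>
  proof -
    have "H (t - \<tau>) \<le> H t"
      using that \<theta> H g_nonneg by (intro DERIV_nonneg_imp_nondecreasing[where f = H]) auto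
    moreover have "0 \<le> \<Psi> \<tau>"
      using that \<theta> \<Psi> by (auto simp: delay_density_def)
    ultimately show ?thesis by simp
  qed
  then have "0 \<le> (LINT \<tau>:{\<theta>..L}|lborel. \<Psi> \<tau> * (H t - H (t - \<tau>)))"
    by (rule set_integral_nonneg)
  also have "\<dots> = X t"
    by (rule delay_compartment_eq_mass_in_transit[OF \<theta> \<Psi> H g g_past X dX X0 t, symmetric])
  finally show ?thesis .

qed

lemma positive_of_deriv_ge_neg_mult:
  fixes f f' k :: "real \<Rightarrow> real"
  assumes T: "0 < T" and f: "continuous_on {0..T} f" and f0: "0 < f 0"
    and k: "continuous_on UNIV k"
    and df: "\<And>s. 0 < s \<Longrightarrow> s < T \<Longrightarrow> (f has_real_derivative f' s) (at s)"
    and bound: "\<And>s. 0 < s \<Longrightarrow> s < T \<Longrightarrow> - k s * f s \<le> f' s"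
  shows "0 < f T"
proof -
  obtain A where A: "\<And>s. (A has_real_derivative k s) (at s)"
    using continuous_on_UNIV_has_antiderivative[OF k] by blast
  have "continuous_on UNIV A"
    using A by (meson DERIV_isCont continuous_at_imp_continuous_on)
  then have "f 0 * exp (A 0) \<le> f T * exp (A T)"
  proof (intro DERIV_nonneg_imp_increasing_open[where f = "\<lambda>s. f s * exp (A s)"])
    show "\<exists>y. ((\<lambda>s. f s * exp (A s)) has_real_derivative y) (at s) \<and> 0 \<le> y"
      if "0 < s" "s < T" for s
    proof -
      have "((\<lambda>s. f s * exp (A s)) has_real_derivative (f' s + k s * f s) * exp (A s)) (at s)"
        using df[OF that] A[of s] by (auto intro!: derivative_eq_intros simp: algebra_simps)
      moreover have "0 \<le> (f' s + k s * f s) * exp (A s)"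
        using bound[OF that] by simp
      ultimately show ?thesis by blast
    qed
  qed (use T f in \<open>auto intro!: continuous_intros elim: continuous_on_subset\<close>)
  moreover have "0 < f 0 * exp (A 0)"
    using f0 by simp
  ultimately have "0 < f T * exp (A T)"
    by linarith
  then show ?thesis
    by (simp add: zero_less_mult_iff)
qed

lemma continuous_positive_induct:
  fixes f :: "real \<Rightarrow> real"
  assumes f: "continuous_on UNIV f" and past: "\<And>s. s \<le> 0 \<Longrightarrow> 0 < f s"
    and step: "\<And>T. 0 < T \<Longrightarrow> (\<And>s. s < T \<Longrightarrow> 0 < f s) \<Longrightarrow> 0 < f T"
  shows "0 < f t"
proof (rule ccontr)
  assume "\<not> 0 < f t"
  define Z where "Z = {0..t} \<inter> {s. f s \<le> 0}"
  have "compact Z"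
    unfolding Z_def by (intro compact_Int_closed compact_Icc closed_Collect_le f continuous_on_const)
  have "\<not> t \<le> 0"
    using past \<open>\<not> 0 < f t\<close> by blast
  then have "t \<in> Z"
    using \<open>\<not> 0 < f t\<close> by (simp add: Z_def)
  then obtain T where T: "T \<in> Z" and T_min: "\<And>s. s \<in> Z \<Longrightarrow> T \<le> s"
    using compact_attains_inf[OF \<open>compact Z\<close>] by (metis empty_iff)
  then have T_le: "T \<le> t" and fT: "f T \<le> 0"
    by (simp_all add: Z_def)
  have "0 < T"
    using past[of T] fT by linarith
  moreover have "0 < f s" if "s < T" for s
  proof (cases "s \<le> 0")
    case True
    then show ?thesis by (rule past)
  next
    case False
    then have "s \<in> {0..t}"
      using that T_le by simp
    moreover have "s \<notin> Z"
      using T_min[of s] that by linarith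
    ultimately show ?thesis
      by (simp add: Z_def)
  qed
  ultimately have "0 < f T"
    by (rule step)
  with fT show False
    by simp
qed

lemma susceptible_infected_positive:
  fixes S I \<beta> \<Psi> \<Phi> :: "real \<Rightarrow> real" and \<gamma> \<mu> p :: real
  assumes \<beta>: "continuous_on UNIV \<beta>" "\<And>s. 0 \<le> \<beta> s"
    and \<Psi>: "\<And>\<tau>. 0 \<le> \<tau> \<Longrightarrow> 0 \<le> \<Psi> \<tau>" and \<Phi>: "\<And>\<rho>. 0 \<le> \<rho> \<Longrightarrow> 0 \<le> \<Phi> \<rho>"
    and p\<gamma>: "0 \<le> p * \<gamma>"
    and S: "continuous_on UNIV S" and I: "continuous_on UNIV I"
    and past: "\<And>s. s \<le> 0 \<Longrightarrow> 0 < S s \<and> 0 < I s"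
    and dS: "\<And>s. 0 < s \<Longrightarrow> (S has_real_derivative
      - \<beta> s * I s * S s + p * \<gamma> * (LINT \<rho>:{0..}|lborel. I (s - \<rho>) * \<Phi> \<rho>)) (at s)"
    and dI: "\<And>s. 0 < s \<Longrightarrow> (I has_real_derivative
      (LINT \<tau>:{0..}|lborel. \<beta> (s - \<tau>) * I (s - \<tau>) * S (s - \<tau>) * \<Psi> \<tau>) - \<gamma> * I s - \<mu> * I s) (at s)"
  shows "0 < S t \<and> 0 < I t"
proof -
  have "0 < min (S t) (I t)"
  proof (rule continuous_positive_induct[where f = "\<lambda>s. min (S s) (I s)"])
    show "continuous_on UNIV (\<lambda>s. min (S s) (I s))"
      by (intro continuous_intros S I)
    show "0 < min (S s) (I s)" if "s \<le> 0" for s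
      using past[OF that] by simp
  next
    fix T :: real
    assume T: "0 < T" and "\<And>s. s < T \<Longrightarrow> 0 < min (S s) (I s)"
    then have S_before: "0 < S s" and I_before: "0 < I s" if "s < T" for s
      using that by auto
    have "0 < S T"
    proof (rule positive_of_deriv_ge_neg_mult[OF T _ _ _ dS, where k = "\<lambda>s. \<beta> s * I s"])
      show "continuous_on {0..T} S" "0 < S 0" "continuous_on UNIV (\<lambda>s. \<beta> s * I s)"
        using continuous_on_subset[OF S] past[of 0] by (auto intro!: continuous_intros \<beta>(1) I)
      show "- (\<beta> s * I s) * S s \<le> - \<beta> s * I s * S s + p * \<gamma> * (LINT \<rho>:{0..}|lborel. I (s - \<rho>) * \<Phi> \<rho>)"
        if "0 < s" "s < T" for s
      proof -
        have "0 \<le> (LINT \<rho>:{0..}|lborel. I (s - \<rho>) * \<Phi> \<rho>)"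
          using that I_before \<Phi> by (intro set_integral_nonneg) (simp add: less_imp_le)
        then show ?thesis
          using p\<gamma> by simp
      qed
    qed
    moreover have "0 < I T"
    proof (rule positive_of_deriv_ge_neg_mult[OF T _ _ continuous_on_const[of UNIV "\<gamma> + \<mu>"] dI])
      show "continuous_on {0..T} I" "0 < I 0"
        using continuous_on_subset[OF I] past[of 0] by auto
      show "- (\<gamma> + \<mu>) * I s \<le>
          (LINT \<tau>:{0..}|lborel. \<beta> (s - \<tau>) * I (s - \<tau>) * S (s - \<tau>) * \<Psi> \<tau>) - \<gamma> * I s - \<mu> * I s"
        if "0 < s" "s < T" for s
      proof -
        have "0 \<le> (LINT \<tau>:{0..}|lborel. \<beta> (s - \<tau>) * I (s - \<tau>) * S (s - \<tau>) * \<Psi> \<tau>)"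
          using that I_before S_before \<beta>(2) \<Psi> by (intro set_integral_nonneg) (simp add: less_imp_le)
        then show ?thesis
          by (simp add: algebra_simps)
      qed
    qed
    ultimately show "0 < min (S T) (I T)"
      by simp
  qed
  then show ?thesis
    by simp
qed

theorem theorem1:
  fixes S E I RT RP D \<beta> \<Psi> \<Phi> :: "real \<Rightarrow> real"
    and \<beta>\<^sub>0 \<gamma> \<mu> p \<theta> L \<epsilon> M c\<^sub>S c\<^sub>I :: real
  assumes \<theta>L: "0 < \<theta>" "\<theta> < L"
    and \<epsilon>M: "0 < \<epsilon>" "\<epsilon> < M"
    and \<Psi>: "delay_density \<Psi> \<theta> L"
    and \<Phi>: "delay_density \<Phi> \<epsilon> M"
    and \<beta>_smooth: "smooth_real \<beta>"
    and \<beta>_nonneg: "\<forall>t. \<beta> t \<ge> 0"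
    and \<beta>_hist: "\<forall>s\<le>0. \<beta> s = \<beta>\<^sub>0"
    and params: "\<gamma> \<ge> 0" "\<mu> \<ge> 0" "0 \<le> p" "p \<le> 1"
    and cS: "c\<^sub>S > 0" and cI: "c\<^sub>I > 0"
    and S_hist: "\<forall>s\<le>0. S s = c\<^sub>S"
    and I_hist: "\<forall>s\<le>0. I s = c\<^sub>I"
    and S_cont: "continuous_on UNIV S"
    and I_cont: "continuous_on UNIV I"
    and E_cont: "continuous_on {0..} E"
    and RT_cont: "continuous_on {0..} RT"
    and RP_cont: "continuous_on {0..} RP"
    and D_cont: "continuous_on {0..} D"
    and E0: "E 0 = \<beta>\<^sub>0 * c\<^sub>I * c\<^sub>S * (LINT \<tau>:{\<theta>..L}|lborel. \<Psi> \<tau> * \<tau>)"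
    and RT0: "RT 0 = c\<^sub>I * p * \<gamma> * (LINT \<rho>:{\<epsilon>..M}|lborel. \<Phi> \<rho> * \<rho>)"
    and RP0: "RP 0 = (1 - p) * \<gamma> * c\<^sub>I * (LINT \<tau>:{\<theta>..L}|lborel. \<Psi> \<tau> * \<tau>)"
    and dS: "\<forall>t>0. (S has_real_derivative
               (- \<beta> t * I t * S t
                + p * \<gamma> * (LINT \<rho>:{0..}|lborel. I (t - \<rho>) * \<Phi> \<rho>))) (at t)"
    and dE: "\<forall>t>0. (E has_real_derivative
               (\<beta> t * I t * S t
                - (LINT \<tau>:{0..}|lborel. \<beta> (t - \<tau>) * I (t - \<tau>) * S (t - \<tau>) * \<Psi> \<tau>))) (at t)"
    and dI: "\<forall>t>0. (I has_real_derivative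
               ((LINT \<tau>:{0..}|lborel. \<beta> (t - \<tau>) * I (t - \<tau>) * S (t - \<tau>) * \<Psi> \<tau>)
                - \<gamma> * I t - \<mu> * I t)) (at t)"
    and dRT: "\<forall>t>0. (RT has_real_derivative
               (p * \<gamma> * I t - p * \<gamma> * (LINT \<rho>:{0..}|lborel. I (t - \<rho>) * \<Phi> \<rho>))) (at t)"
    and dRP: "\<forall>t>0. (RP has_real_derivative ((1 - p) * \<gamma> * I t)) (at t)"
    and dD: "\<forall>t>0. (D has_real_derivative (\<mu> * I t)) (at t)"
  shows "\<forall>t>0. S t \<ge> 0 \<and> E t \<ge> 0 \<and> I t \<ge> 0 \<and> RT t \<ge> 0 \<and> RP t \<ge> 0"
proof -
  have \<beta>_cont: "continuous_on UNIV \<beta>"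
    using \<beta>_smooth unfolding smooth_real_def
    by (metis funpow_0 differentiable_imp_continuous_within continuous_at_imp_continuous_on)
  have SI: "0 < S t \<and> 0 < I t" for t
    by (rule susceptible_infected_positive[OF \<beta>_cont _ _ _ _ S_cont I_cont _ dS[rule_format] dI[rule_format]])
      (use \<beta>_nonneg \<Psi> \<Phi> params cS cI S_hist I_hist in \<open>auto simp: delay_density_def\<close>)
  then have S_nonneg: "0 \<le> S t" and I_nonneg: "0 \<le> I t" for t
    by (simp_all add: less_imp_le)
  have E: "0 \<le> E t" if "0 \<le> t" for t
    by (rule delay_compartment_nonneg[OF _ \<Psi>, where g = "\<lambda>s. \<beta> s * I s * S s" and g\<^sub>0 = "\<beta>\<^sub>0 * c\<^sub>I * c\<^sub>S" and X = E])
      (use \<theta>L \<beta>_nonneg S_nonneg I_nonneg \<beta>_hist I_hist S_hist E_cont dE E0 that in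
        \<open>auto intro!: continuous_intros \<beta>_cont I_cont S_cont mult_nonneg_nonneg\<close>)
  have RT: "0 \<le> RT t" if "0 \<le> t" for t
    by (rule delay_compartment_nonneg[OF _ \<Phi>, where g = "\<lambda>s. p * \<gamma> * I s" and g\<^sub>0 = "p * \<gamma> * c\<^sub>I" and X = RT])
      (use \<epsilon>M I_nonneg params I_hist RT_cont dRT RT0 that in
        \<open>auto intro!: continuous_intros I_cont simp: mult.assoc mult.left_commute\<close>)
  have RP: "0 \<le> RP t" if "0 \<le> t" for t
  proof -
    have "0 \<le> (LINT \<tau>:{\<theta>..L}|lborel. \<Psi> \<tau> * \<tau>)"
      using \<Psi> \<theta>L by (intro set_integral_nonneg) (simp add: delay_density_def)
    then have "0 \<le> RP 0"
      using RP0 params cI by simp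
    also have "RP 0 \<le> RP t"
      using dRP params I_nonneg continuous_on_subset[OF RP_cont] that
      by (intro DERIV_nonneg_imp_increasing_open[where f = RP]) (auto intro!: mult_nonneg_nonneg)
    finally show ?thesis .
  qed
  show ?thesis
    using SI E RT RP by (simp add: less_imp_le)
qed

end
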